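(* Let $$\Pi_0(\phi)=2\sum_{n=1}^{\infty}\frac{(-1)^{n-1}}{n^3\binom{2n}{n}}\,\phi^{n-1}=1-\frac{\phi}{24}+\frac{\phi^2}{270}+\cdots,$$ a power series converging on the disc $|\phi|<4$. Then $\Pi_0$ satisfies the ordinary differential equation $$\Big((4+\phi)\vartheta^4+(10+4\phi)\vartheta^3+(8+6\phi)\vartheta^2+(2+4\phi)\vartheta+\phi\Big)\Pi_0(\phi)=0,$$ where $\vartheta=\phi\,\frac{d}{d\phi}$.
   Context: $\binom{2n}{n}$ denotes the central binomial coefficient. The operator $\vartheta=\phi\frac{d}{d\phi}$ is the Euler derivative, and $\vartheta^k$ denotes its $k$-fold iterate. *)

theory Defs
  imports "HOL-Analysis.Analysis"
begin

definition Pi0 :: "complex \<Rightarrow> complex" where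
  "Pi0 \<phi> = 2 * (\<Sum>m. (-1) ^ m / (of_nat (Suc m) ^ 3 * of_nat ((2 * Suc m) choose (Suc m))) * \<phi> ^ m)"

definition theta :: "(complex \<Rightarrow> complex) \<Rightarrow> complex \<Rightarrow> complex" where
  "theta f = (\<lambda>\<phi>. \<phi> * deriv f \<phi>)"

end

theory Submission
  imports Defs
begin

(* Inside the disc |phi| < 4 every theta^k Pi0 is again a power series: theta^k multiplies the
   coefficient a n of phi^n by n^k. Applied termwise, the operator sends a n phi^n to
   e n phi^n + (n+1)^4 a n phi^(n+1) with e n = 2 n (n+1)^2 (2n+1) a n. The identity
   (n+1) C(2n+2, n+1) = 2 (2n+1) C(2n, n) gives the coefficient recurrence
   2 (n+2)^2 (2n+3) a (n+1) = -(n+1)^3 a n, i.e. (n+1)^4 a n = - e (n+1), so the series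
   telescopes to e 0 = 0. The same recurrence yields |a (n+1)| <= |a n| / 4, hence the radius
   of convergence 4. *)

lemma power_series_Euler_derivative_sums:
  fixes c :: "nat \<Rightarrow> 'a::{real_normed_field,banach}"
  assumes "summable (\<lambda>n. diffs c n * z ^ n)"
  shows "(\<lambda>n. of_nat n * c n * z ^ n) sums (z * (\<Sum>n. diffs c n * z ^ n))"
proof -
  have "(\<lambda>n. z * (diffs c n * z ^ n)) sums (z * (\<Sum>n. diffs c n * z ^ n))"
    using assms by (intro sums_mult summable_sums)
  moreover have "(\<lambda>n. z * (diffs c n * z ^ n)) = (\<lambda>n. of_nat (Suc n) * c (Suc n) * z ^ Suc n)"
    by (simp add: diffs_def fun_eq_iff algebra_simps)
  ultimately show ?thesis
    using sums_Suc_iff[of "\<lambda>n. of_nat n * c n * z ^ n"] by simp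
qed

lemma summable_power_series_times_power:
  fixes a :: "nat \<Rightarrow> 'a::{real_normed_field,banach}"
  assumes summable: "\<And>z. norm z < R \<Longrightarrow> summable (\<lambda>n. a n * z ^ n)" and "norm z < R"
  shows "summable (\<lambda>n. of_nat n ^ k * a n * z ^ n)"
  using assms(2)
proof (induction k arbitrary: z)
  case 0
  then show ?case using summable by simp
next
  case (Suc k)
  have "summable (\<lambda>n. diffs (\<lambda>n. of_nat n ^ k * a n) n * z ^ n)"
    by (rule termdiff_converges[OF Suc.prems]) (use Suc.IH in simp)
  then show ?case
    using power_series_Euler_derivative_sums sums_summable by (fastforce simp: mult.assoc)
qed

lemma theta_iterate_power_series:
  fixes a :: "nat \<Rightarrow> complex"
  assumes summable: "\<And>z. norm z < R \<Longrightarrow> summable (\<lambda>n. a n * z ^ n)"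
    and f: "\<And>z. norm z < R \<Longrightarrow> f z = (\<Sum>n. a n * z ^ n)"
    and "norm z < R"
  shows "(theta ^^ k) f z = (\<Sum>n. of_nat n ^ k * a n * z ^ n)"
  using assms(3)
proof (induction k arbitrary: z)
  case 0
  then show ?case using f by simp
next
  case (Suc k)
  let ?c = "\<lambda>n. of_nat n ^ k * a n"
  have summable_k: "summable (\<lambda>n. ?c n * w ^ n)" if "norm w < R" for w
    using summable_power_series_times_power[OF summable that] by (simp add: mult.assoc)
  have "((\<lambda>w. \<Sum>n. ?c n * w ^ n) has_field_derivative (\<Sum>n. diffs ?c n * z ^ n)) (at z)"
    by (rule termdiffs_strong'[OF summable_k Suc.prems])
  then have "((theta ^^ k) f has_field_derivative (\<Sum>n. diffs ?c n * z ^ n)) (at z)"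
    by (rule has_field_derivative_transform_within_open[where S = "ball 0 R"])
       (use Suc in \<open>auto simp: mult.assoc\<close>)
  then have "(theta ^^ Suc k) f z = z * (\<Sum>n. diffs ?c n * z ^ n)"
    by (simp add: theta_def DERIV_imp_deriv)
  also have "\<dots> = (\<Sum>n. of_nat n ^ Suc k * a n * z ^ n)"
    using power_series_Euler_derivative_sums[OF termdiff_converges[OF Suc.prems summable_k]]
    by (simp add: sums_iff mult.assoc)
  finally show ?case .
qed

lemma power_series_Euler_ode:
  fixes a :: "nat \<Rightarrow> 'a::{real_normed_field,banach}"
  assumes rec: "\<And>n. 2 * (of_nat n + 2)^2 * (2 * of_nat n + 3) * a (Suc n) = - ((of_nat n + 1)^3 * a n)"
    and summable: "\<And>k. summable (\<lambda>n. of_nat n ^ k * a n * z ^ n)"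
  defines "S k \<equiv> \<Sum>n. of_nat n ^ k * a n * z ^ n"
  shows "(4 + z) * S 4 + (10 + 4 * z) * S 3 + (8 + 6 * z) * S 2 + (2 + 4 * z) * S 1 + z * S 0 = 0"
proof -
  define e where "e n = 2 * of_nat n * (of_nat n + 1)^2 * (2 * of_nat n + 1) * a n" for n
  have e_Suc: "e (Suc n) = - ((of_nat n + 1)^4 * a n)" for n
  proof -
    have "e (Suc n) = (of_nat n + 1) * (2 * (of_nat n + 2)^2 * (2 * of_nat n + 3) * a (Suc n))"
      by (simp add: e_def algebra_simps)
    also have "\<dots> = - ((of_nat n + 1) * (of_nat n + 1)^3 * a n)"
      by (simp add: rec)
    finally show ?thesis by (simp add: power4_eq_xxxx power3_eq_cube)
  qed
  let ?t = "\<lambda>k n. of_nat n ^ k * a n * z ^ n"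
  have telescoping: "(4 + z) * ?t 4 n + (10 + 4 * z) * ?t 3 n + (8 + 6 * z) * ?t 2 n + (2 + 4 * z) * ?t 1 n
      + z * ?t 0 n = e n * z ^ n - e (Suc n) * z ^ Suc n" for n
    unfolding e_Suc power_Suc unfolding e_def
    by (simp add: algebra_simps power2_eq_square power3_eq_cube power4_eq_xxxx)
  have "(\<lambda>n. (4 + z) * ?t 4 n + (10 + 4 * z) * ?t 3 n + (8 + 6 * z) * ?t 2 n + (2 + 4 * z) * ?t 1 n
      + z * ?t 0 n) sums ((4 + z) * S 4 + (10 + 4 * z) * S 3 + (8 + 6 * z) * S 2 + (2 + 4 * z) * S 1 + z * S 0)"
    unfolding S_def by (intro sums_add sums_mult summable_sums summable)
  moreover have "(\<lambda>n. e n * z ^ n) \<longlonglongrightarrow> 0"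
  proof (rule summable_LIMSEQ_zero)
    have "e n * z ^ n = 4 * ?t 4 n + 10 * ?t 3 n + 8 * ?t 2 n + 2 * ?t 1 n" for n
      by (simp add: e_def algebra_simps power2_eq_square power3_eq_cube power4_eq_xxxx)
    then show "summable (\<lambda>n. e n * z ^ n)"
      by (simp only:) (intro summable_add summable_mult summable)
  qed
  then have "(\<lambda>n. e n * z ^ n - e (Suc n) * z ^ Suc n) sums 0"
    using telescope_sums' by (fastforce simp: e_def)
  ultimately show ?thesis
    unfolding telescoping by (rule sums_unique2)
qed

lemma Suc_times_central_binomial_Suc:
  "Suc n * ((2 * Suc n) choose Suc n) = 2 * (2 * n + 1) * ((2 * n) choose n)"
proof -
  have "Suc (2 * n) choose n = Suc (2 * n) choose Suc n"
    using binomial_symmetric[of n "Suc (2 * n)"] by (simp add: Suc_diff_le)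
  then have odd: "Suc n * (Suc (2 * n) choose n) = Suc (2 * n) * ((2 * n) choose n)"
    using Suc_times_binomial_eq[of "2 * n" n] by simp
  have "Suc n * (Suc n * ((2 * Suc n) choose Suc n)) = Suc n * (2 * (Suc n * (Suc (2 * n) choose n)))"
    using Suc_times_binomial[of n "Suc (2 * n)"] by (simp del: binomial_Suc_Suc)
  also have "\<dots> = Suc n * (2 * (2 * n + 1) * ((2 * n) choose n))"
    unfolding odd by simp
  finally show ?thesis by (simp only: mult_left_cancel)
qed

definition pi0_coeff :: "nat \<Rightarrow> complex" where
  "pi0_coeff m = 2 * (-1) ^ m / (of_nat (Suc m) ^ 3 * of_nat ((2 * Suc m) choose Suc m))"

lemma pi0_coeff_Suc:
  "2 * (of_nat m + 2)^2 * (2 * of_nat m + 3) * pi0_coeff (Suc m) = - ((of_nat m + 1)^3 * pi0_coeff m)"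
proof -
  define C where "C = (of_nat ((2 * Suc m) choose Suc m) :: complex)"
  define C' where "C' = (of_nat ((2 * Suc (Suc m)) choose Suc (Suc m)) :: complex)"
  have nonzero: "C \<noteq> 0" "C' \<noteq> 0" "(of_nat m + 2 :: complex) \<noteq> 0" "(of_nat m + 1 :: complex) \<noteq> 0"
    "(2 * (2 * of_nat m + 3) :: complex) \<noteq> 0"
    unfolding C_def C'_def
    using of_nat_neq_0[of m, where ?'a = complex] of_nat_neq_0[of "Suc m", where ?'a = complex]
      of_nat_neq_0[of "4 * m + 5", where ?'a = complex]
    by (simp_all del: binomial_Suc_Suc add: add.commute add_eq_0_iff)
  have central: "(of_nat m + 2) * C' = 2 * (2 * of_nat m + 3) * C"
    using arg_cong[OF Suc_times_central_binomial_Suc[of "Suc m"], of "of_nat :: nat \<Rightarrow> complex"]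
    unfolding C_def C'_def by (simp add: algebra_simps del: binomial_Suc_Suc)
  have coeff_m: "pi0_coeff m = 2 * (-1) ^ m / ((of_nat m + 1)^3 * C)"
    unfolding pi0_coeff_def C_def by (simp add: add.commute)
  have coeff_Suc_m: "pi0_coeff (Suc m) = - 2 * (-1) ^ m / ((of_nat m + 2)^3 * C')"
    unfolding pi0_coeff_def C'_def by (simp del: binomial_Suc_Suc add: add.commute)
  have "2 * (of_nat m + 2)^2 * (2 * of_nat m + 3) * pi0_coeff (Suc m)
      = 2 * (2 * of_nat m + 3) * (- 2 * (-1) ^ m) / ((of_nat m + 2) * C')"
    using nonzero unfolding coeff_Suc_m by (simp add: divide_simps power2_eq_square power3_eq_cube)
  also have "\<dots> = - 2 * (-1) ^ m / C"
    unfolding central using nonzero(5) by (rule mult_divide_mult_cancel_left)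
  also have "\<dots> = - ((of_nat m + 1)^3 * pi0_coeff m)"
    using nonzero unfolding coeff_m by simp
  finally show ?thesis .
qed

lemma norm_pi0_coeff_Suc_le: "norm (pi0_coeff (Suc m)) \<le> norm (pi0_coeff m) / 4"
proof -
  define D where "D = 2 * (real m + 2)^2 * (2 * real m + 3)"
  have D_pos: "D > 0"
    by (simp add: D_def)
  have D_complex: "(2 * (of_nat m + 2)^2 * (2 * of_nat m + 3) :: complex) = of_real D"
    by (simp add: D_def)
  have norm_Suc: "norm (of_nat m + 1 :: complex) = real m + 1"
    using norm_of_nat[of "Suc m", where ?'a = complex] by (simp add: add.commute)
  have "D * (4 * norm (pi0_coeff (Suc m))) = 4 * (real m + 1)^3 * norm (pi0_coeff m)"
    using arg_cong[OF pi0_coeff_Suc[of m], of norm] D_pos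
    unfolding D_complex by (simp add: norm_mult norm_power norm_Suc)
  also have "\<dots> \<le> D * norm (pi0_coeff m)"
    by (rule mult_right_mono) (simp_all add: D_def power2_eq_square power3_eq_cube algebra_simps)
  finally show ?thesis
    using D_pos by simp
qed

lemma summable_pi0_coeff: "norm z < 4 \<Longrightarrow> summable (\<lambda>m. pi0_coeff m * z ^ m)"
proof (rule summable_ratio_test[where c = "norm z / 4" and N = 0])
  fix m
  have "norm (pi0_coeff (Suc m) * z ^ Suc m) = norm (pi0_coeff (Suc m)) * (norm z * norm z ^ m)"
    by (simp add: norm_mult norm_power)
  also have "\<dots> \<le> norm (pi0_coeff m) / 4 * (norm z * norm z ^ m)"
    by (rule mult_right_mono[OF norm_pi0_coeff_Suc_le]) simp
  also have "\<dots> = norm z / 4 * norm (pi0_coeff m * z ^ m)"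
    by (simp add: norm_mult norm_power)
  finally show "norm (pi0_coeff (Suc m) * z ^ Suc m) \<le> norm z / 4 * norm (pi0_coeff m * z ^ m)" .
qed simp

lemma Pi0_eq_power_series:
  assumes "norm z < 4"
  shows "Pi0 z = (\<Sum>m. pi0_coeff m * z ^ m)"
proof -
  let ?b = "\<lambda>m. (-1) ^ m / (of_nat (Suc m) ^ 3 * of_nat ((2 * Suc m) choose (Suc m))) * z ^ m"
  have coeff: "(\<lambda>m. pi0_coeff m * z ^ m) = (\<lambda>m. 2 * ?b m)"
    by (simp add: pi0_coeff_def fun_eq_iff)
  have "summable (\<lambda>m. 2 * ?b m)"
    using summable_pi0_coeff[OF assms] by (simp only: coeff)
  then have "summable ?b"
    by (rule summable_mult_D) simp
  then show ?thesis
    unfolding Pi0_def coeff by (rule suminf_mult[symmetric])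
qed

theorem mainTheorem1:
  fixes \<phi> :: complex
  assumes "norm \<phi> < 4"
  shows "(4 + \<phi>) * (theta ^^ 4) Pi0 \<phi> + (10 + 4 * \<phi>) * (theta ^^ 3) Pi0 \<phi>
       + (8 + 6 * \<phi>) * (theta ^^ 2) Pi0 \<phi> + (2 + 4 * \<phi>) * theta Pi0 \<phi> + \<phi> * Pi0 \<phi> = 0"
proof -
  have theta_Pi0: "(theta ^^ k) Pi0 \<phi> = (\<Sum>n. of_nat n ^ k * pi0_coeff n * \<phi> ^ n)" for k
    by (rule theta_iterate_power_series[OF summable_pi0_coeff Pi0_eq_power_series assms])
  have "Pi0 \<phi> = (theta ^^ 0) Pi0 \<phi>" "theta Pi0 \<phi> = (theta ^^ 1) Pi0 \<phi>"
    by simp_all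
  then show ?thesis
    using power_series_Euler_ode[OF pi0_coeff_Suc summable_power_series_times_power[OF summable_pi0_coeff assms]]
    by (simp only: theta_Pi0)
qed

end
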